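(* Let $n\ge2$ and let $\mathcal{S}$ be a quadric hypersurface in $\mathbb{R}^n$ containing at least two points but no line, with an affine change of variables $\mathbf{s}=T\mathbf{s}'+\mathbf{v}$ bringing it into one of the normal forms (1)–(3), and with the associated parameterisation $\boldsymbol{\sigma}(\mathbf{t})=T\boldsymbol{\sigma}'(\mathbf{t})+\mathbf{v}$, $\mathbf{t}\in D$, described in the context. Let $O\subseteq D\setminus\sigma_1^{-1}(0)$ be a nonempty open set. Then there is $\mathbf{t}\in O$ such that \[\det\left(\frac{\partial\overline{\boldsymbol{\sigma}}'(\mathbf{t})}{\partial\mathbf{t}}\right)\neq0,\] where $\overline{\boldsymbol{\sigma}}'=(\sigma_1',\dots,\sigma_{n-1}')^T$.
   Context: Let $\mathcal{S}=\{\mathbf{s}\in\mathbb{R}^n:\tfrac12\mathbf{s}^TA\mathbf{s}+\mathbf{b}^T\mathbf{s}+c=0\}$ with $A$ a nonzero real symmetric matrix, and assume $\mathcal{S}$ contains at least two points but no line. Let $T$ be an invertible real $n\times n$ matrix and $\mathbf{v}\in\mathbb{R}^n$ such that under $\mathbf{s}=T\mathbf{s}'+\mathbf{v}$ the equation of $\mathcal{S}$ becomes one of: (1) (when $\operatorname{rk}A=n-1$) $\sum_{j=1}^{n-1}\epsilon_js_j'^2=s_n'$ with $\epsilon_j\in\{-1,1\}$; (2) (when $\operatorname{rk}A=n$ and $A$ has eigenvalues of both signs) $s_1's_n'+\sum_{j=2}^{n-1}\epsilon_js_j'^2=c'$ with $c'\neq0$, $\epsilon_j\in\{-1,1\}$;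 (3) (when $\operatorname{rk}A=n$ and all eigenvalues of $A$ have the same sign) $\sum_{j=1}^ns_j'^2=1$. The parameterisation $\boldsymbol{\sigma}'=(\sigma_1',\dots,\sigma_n')^T$ of the normal form is: in case (1), $\sigma_j'(\mathbf{t})=t_j$ for $j\le n-1$, $\sigma_n'(\mathbf{t})=\sum_{j=1}^{n-1}\epsilon_jt_j^2$, $D=\mathbb{R}^{n-1}$; in case (2), $\sigma_j'(\mathbf{t})=t_j$ for $j\le n-1$, $\sigma_n'(\mathbf{t})=\frac{1}{t_1}\big(c'-\sum_{j=2}^{n-1}\epsilon_jt_j^2\big)$, $D=(\mathbb{R}\setminus\{0\})\times\mathbb{R}^{n-2}$; in case (3), $\boldsymbol{\sigma}'(\mathbf{t})=\boldsymbol{\tau}(\boldsymbol{\varphi})$ with $\varphi_j=2\arctan(t_j)$, where $\boldsymbol{\tau}$ is the spherical-coordinate map $\tau_1=\cos\varphi_1$, $\tau_k=\sin\varphi_1\cdots\sin\varphi_{k-1}\cos\varphi_k$ for $2\le k\le n-1$, $\tau_n=\sin\varphi_1\cdots\sin\varphi_{n-1}$ (so each component is rational in $\mathbf{t}$ via $\cos\varphi_j=\frac{1-t_j^2}{1+t_j^2}$, $\sin\varphi_j=\frac{2t_j}{1+t_j^2}$), $D=\mathbb{R}^{n-1}$. Then $\boldsymbol{\sigma}(\mathbf{t})=T\boldsymbol{\sigma}'(\mathbf{t})+\mathbf{v}$ with components $\sigma_1,\dots,\sigma_n$, and $\sigma_1^{-1}(0)$ is the zero set of $\sigma_1$. *)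

theory Defs
  imports "HOL-Analysis.Analysis"
begin

text \<open>Conventions: a vector of R^m is a function nat => real vanishing outside
  the indices 0..<m (index i stands for the paper's coordinate i+1); an m x m
  matrix is a function nat => nat => real, only entries with indices < m matter.
  Topology on R^m: subspace topology of the product topology on nat => real,
  which on this finite-dimensional subspace is the Euclidean topology.\<close>

definition Rn :: "nat \<Rightarrow> (nat \<Rightarrow> real) set" where
  "Rn m = {x. \<forall>i\<ge>m. x i = 0}"

definition quadf :: "nat \<Rightarrow> (nat \<Rightarrow> nat \<Rightarrow> real) \<Rightarrow> (nat \<Rightarrow> real) \<Rightarrow> real
    \<Rightarrow> (nat \<Rightarrow> real) \<Rightarrow> real" where
  "quadf n A b c s = 1/2 * (\<Sum>i<n. \<Sum>j<n. s i * A i j * s j) + (\<Sum>i<n. b i * s i) + c"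

definition quadric :: "nat \<Rightarrow> (nat \<Rightarrow> nat \<Rightarrow> real) \<Rightarrow> (nat \<Rightarrow> real) \<Rightarrow> real
    \<Rightarrow> (nat \<Rightarrow> real) set" where
  "quadric n A b c = {s \<in> Rn n. quadf n A b c s = 0}"

definition symmetric_mat :: "nat \<Rightarrow> (nat \<Rightarrow> nat \<Rightarrow> real) \<Rightarrow> bool" where
  "symmetric_mat n A \<longleftrightarrow> (\<forall>i<n. \<forall>j<n. A i j = A j i)"

definition nonzero_mat :: "nat \<Rightarrow> (nat \<Rightarrow> nat \<Rightarrow> real) \<Rightarrow> bool" where
  "nonzero_mat n A \<longleftrightarrow> (\<exists>i<n. \<exists>j<n. A i j \<noteq> 0)"

definition invertible_mat :: "nat \<Rightarrow> (nat \<Rightarrow> nat \<Rightarrow> real) \<Rightarrow> bool" where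
  "invertible_mat n T \<longleftrightarrow> (\<exists>U. \<forall>i<n. \<forall>k<n.
      (\<Sum>j<n. T i j * U j k) = (if i = k then 1 else 0) \<and>
      (\<Sum>j<n. U i j * T j k) = (if i = k then 1 else 0))"

definition contains_line :: "nat \<Rightarrow> (nat \<Rightarrow> real) set \<Rightarrow> bool" where
  "contains_line n X \<longleftrightarrow> (\<exists>p\<in>Rn n. \<exists>d\<in>Rn n. d \<noteq> (\<lambda>_. 0) \<and>
      (\<forall>r::real. (\<lambda>i. p i + r * d i) \<in> X))"

definition affmap :: "nat \<Rightarrow> (nat \<Rightarrow> nat \<Rightarrow> real) \<Rightarrow> (nat \<Rightarrow> real) \<Rightarrow> (nat \<Rightarrow> real)
    \<Rightarrow> (nat \<Rightarrow> real)" where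
  "affmap n T v s = (\<lambda>i. if i < n then (\<Sum>j<n. T i j * s j) + v i else 0)"

definition normal_form :: "nat \<Rightarrow> nat \<Rightarrow> (nat \<Rightarrow> real) \<Rightarrow> real \<Rightarrow> (nat \<Rightarrow> real) \<Rightarrow> real" where
  "normal_form k n eps c' s =
     (if k = 1 then (\<Sum>j<n-1. eps j * (s j)\<^sup>2) - s (n-1)
      else if k = 2 then s 0 * s (n-1) + (\<Sum>j\<in>{1..<n-1}. eps j * (s j)\<^sup>2) - c'
      else (\<Sum>j<n. (s j)\<^sup>2) - 1)"

definition sigma' :: "nat \<Rightarrow> nat \<Rightarrow> (nat \<Rightarrow> real) \<Rightarrow> real \<Rightarrow> nat \<Rightarrow> (nat \<Rightarrow> real) \<Rightarrow> real" where
  "sigma' k n eps c' i t =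
     (if n \<le> i then 0
      else if k = 1 then (if i < n-1 then t i else (\<Sum>j<n-1. eps j * (t j)\<^sup>2))
      else if k = 2 then (if i < n-1 then t i
                          else (c' - (\<Sum>j\<in>{1..<n-1}. eps j * (t j)\<^sup>2)) / t 0)
      else (let \<phi> = (\<lambda>j. 2 * arctan (t j)) in
            if i < n-1 then (\<Prod>l<i. sin (\<phi> l)) * cos (\<phi> i)
            else (\<Prod>l<n-1. sin (\<phi> l))))"

definition paramdom :: "nat \<Rightarrow> nat \<Rightarrow> (nat \<Rightarrow> real) set" where
  "paramdom k n = (if k = 2 then {t \<in> Rn (n-1). t 0 \<noteq> 0} else Rn (n-1))"

definition sigma :: "nat \<Rightarrow> (nat \<Rightarrow> nat \<Rightarrow> real) \<Rightarrow> (nat \<Rightarrow> real) \<Rightarrow> nat \<Rightarrow> (nat \<Rightarrow> real)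
    \<Rightarrow> real \<Rightarrow> (nat \<Rightarrow> real) \<Rightarrow> (nat \<Rightarrow> real)" where
  "sigma n T v k eps c' t = affmap n T v (\<lambda>i. sigma' k n eps c' i t)"

definition partial :: "((nat \<Rightarrow> real) \<Rightarrow> real) \<Rightarrow> nat \<Rightarrow> (nat \<Rightarrow> real) \<Rightarrow> real" where
  "partial f j t = deriv (\<lambda>h. f (t(j := t j + h))) 0"

definition detm :: "nat \<Rightarrow> (nat \<Rightarrow> nat \<Rightarrow> real) \<Rightarrow> real" where
  "detm m M = (\<Sum>p | p permutes {..<m}. of_int (sign p) * (\<Prod>i<m. M i (p i)))"

end

theory Submission imports Defs
begin

text \<open>The Jacobian of the first \<open>n - 1\<close> components of \<open>\<sigma>'\<close> is lower triangular.
  In the normal forms (1) and (2) these components are the coordinates \<open>t\<^sub>j\<close>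
  themselves, so the determinant is 1 everywhere. On the sphere, \<open>\<sigma>'\<^sub>i\<close> depends only on
  \<open>t\<^sub>1, \<dots>, t\<^sub>i\<close> and its diagonal entry is \<open>-sin \<phi>\<^sub>1 \<cdots> sin \<phi>\<^sub>i \<cdot> 2/(1 + t\<^sub>i\<^sup>2)\<close>,
  which vanishes only if some \<open>t\<^sub>l = 0\<close>; every nonempty open set contains a point
  with no vanishing coordinate.\<close>

lemma detm_lower_triangular:
  assumes "\<And>i j. i < m \<Longrightarrow> j < m \<Longrightarrow> i < j \<Longrightarrow> M i j = 0"
  shows "detm m M = (\<Prod>i<m. M i i)"
proof -
  let ?P = "{p. p permutes {..<m}}"
  let ?f = "\<lambda>p. of_int (sign p) * (\<Prod>i<m. M i (p i))"
  have vanish: "?f p = 0" if "p \<in> ?P - {id}" for p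
  proof -
    have p: "p permutes {..<m}" "p \<noteq> id" using that by auto
    then obtain i where i: "i < m" "p i > i"
      using permutes_natset_le[OF p(1)] by (meson lessThan_iff not_le)
    have "p i < m" using p(1) i(1) by (meson lessThan_iff permutes_in_image)
    hence "M i (p i) = 0" using assms i by blast
    thus ?thesis using i(1) by (simp add: prod_zero_iff) blast
  qed
  have "detm m M = ?f id + sum ?f (?P - {id})"
    unfolding detm_def by (rule sum.remove) (simp_all add: finite_permutations permutes_id)
  also have "sum ?f (?P - {id}) = 0" using vanish by (intro sum.neutral) blast
  finally show ?thesis by (simp add: sign_id)
qed

lemma openin_Rn_obtains_nonzero_coordinates:
  assumes "openin (top_of_set (Rn m)) S" "t0 \<in> S"
  obtains t where "t \<in> S" "\<And>i. i < m \<Longrightarrow> t i \<noteq> 0"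
proof -
  obtain U where U: "open U" "S = Rn m \<inter> U" using assms(1) openin_open by blast
  define shift where "shift = (\<lambda>x::real. \<lambda>i. if i < m then t0 i + x else 0)"
  have "continuous_on UNIV (\<lambda>x. shift x i)" for i
    by (cases "i < m") (auto simp: shift_def intro!: continuous_intros)
  hence "continuous_on UNIV shift" by (rule continuous_on_coordinatewise_then_product)
  with U(1) have "open (shift -` U)" by (rule open_vimage)
  moreover have "shift 0 = t0" using assms U by (auto simp: shift_def Rn_def)
  ultimately obtain e where e: "e > 0" "ball 0 e \<subseteq> shift -` U"
    using assms(2) U(2) open_contains_ball by (metis IntD2 vimageI)
  have "infinite {0<..<e}" using e(1) by simp
  then obtain x where x: "x \<in> {0<..<e}" "x \<notin> (\<lambda>i. - t0 i) ` {..<m}"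
    by (meson finite_imageI finite_lessThan finite_subset subsetI)
  have "x \<in> ball 0 e" using x by (simp add: dist_real_def)
  hence "shift x \<in> U" using e by blast
  moreover have "shift x \<in> Rn m" by (auto simp: shift_def Rn_def)
  moreover have "shift x i \<noteq> 0" if "i < m" for i using x that by (force simp: shift_def)
  ultimately show thesis using U(2) that by blast
qed

lemma partial_eqI:
  assumes "((\<lambda>h. f (t(j := t j + h))) has_real_derivative D) (at 0)"
  shows "partial f j t = D"
  using assms unfolding partial_def by (rule DERIV_imp_deriv)

lemma partial_eq_0_if_independent:
  assumes "\<And>x. f (t(j := x)) = f t"
  shows "partial f j t = 0"
  by (rule partial_eqI) (simp add: assms)

lemma sin_double_arctan_eq_0_iff: "sin (2 * arctan x) = 0 \<longleftrightarrow> x = 0"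
proof -
  have "1 + x\<^sup>2 > 0" by (simp add: add_pos_nonneg)
  thus ?thesis by (simp add: sin_double sin_arctan)
qed

lemma partial_sigma'_graph:
  assumes "k = 1 \<or> k = 2" "i < n - 1"
  shows "partial (sigma' k n eps c' i) j t = (if i = j then 1 else 0)"
proof (cases "i = j")
  case True
  have "(\<lambda>h. sigma' k n eps c' i (t(j := t j + h))) = (\<lambda>h. t j + h)"
    using assms True by (auto simp: sigma'_def)
  moreover have "((\<lambda>h. t j + h) has_real_derivative 1) (at 0)"
    by (auto intro!: derivative_eq_intros)
  ultimately show ?thesis using True by (intro partial_eqI) simp
next
  case False
  have "sigma' k n eps c' i (t(j := x)) = sigma' k n eps c' i t" for x
    using assms False by (auto simp: sigma'_def)
  thus ?thesis using False by (simp add: partial_eq_0_if_independent)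
qed

lemma detm_jacobian_sigma'_graph:
  assumes "k = 1 \<or> k = 2"
  shows "detm (n - 1) (\<lambda>i j. partial (sigma' k n eps c' i) j t) = 1"
  by (subst detm_lower_triangular) (simp_all add: partial_sigma'_graph[OF assms])

lemma partial_sigma'_sphere_upper:
  assumes "i < n - 1" "i < j"
  shows "partial (sigma' 3 n eps c' i) j t = 0"
proof (rule partial_eq_0_if_independent)
  fix x
  have "(\<Prod>l<i. sin (2 * arctan ((t(j := x)) l))) = (\<Prod>l<i. sin (2 * arctan (t l)))"
    using assms by (intro prod.cong) auto
  thus "sigma' 3 n eps c' i (t(j := x)) = sigma' 3 n eps c' i t"
    using assms by (simp add: sigma'_def Let_def)
qed

lemma partial_sigma'_sphere_diag:
  assumes "i < n - 1"
  shows "partial (sigma' 3 n eps c' i) i t =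
    (\<Prod>l<i. sin (2 * arctan (t l))) * (- sin (2 * arctan (t i)) * (2 / (1 + (t i)\<^sup>2)))"
proof (rule partial_eqI)
  define P where "P = (\<Prod>l<i. sin (2 * arctan (t l)))"
  have "(\<Prod>l<i. sin (2 * arctan ((t(i := x)) l))) = P" for x
    unfolding P_def by (rule prod.cong) auto
  hence sigma'_along: "sigma' 3 n eps c' i (t(i := t i + h)) = P * cos (2 * arctan (t i + h))"
    for h using assms by (simp add: sigma'_def Let_def)
  have "((\<lambda>h. P * cos (2 * arctan (t i + h))) has_real_derivative
      P * (- sin (2 * arctan (t i + 0)) * (2 * (inverse (1 + (t i + 0)\<^sup>2) * 1)))) (at 0)"
    by (intro DERIV_cmult DERIV_chain2[OF DERIV_cos] DERIV_chain2[OF DERIV_arctan])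
       (auto intro!: derivative_eq_intros)
  thus "((\<lambda>h. sigma' 3 n eps c' i (t(i := t i + h))) has_real_derivative
      (\<Prod>l<i. sin (2 * arctan (t l))) * (- sin (2 * arctan (t i)) * (2 / (1 + (t i)\<^sup>2)))) (at 0)"
    by (simp add: sigma'_along P_def divide_inverse)
qed

lemma detm_jacobian_sigma'_sphere_neq_0:
  assumes "\<And>l. l < n - 1 \<Longrightarrow> t l \<noteq> 0"
  shows "detm (n - 1) (\<lambda>i j. partial (sigma' 3 n eps c' i) j t) \<noteq> 0"
proof -
  have "partial (sigma' 3 n eps c' i) i t \<noteq> 0" if "i < n - 1" for i
  proof -
    have "sin (2 * arctan (t l)) \<noteq> 0" if "l \<le> i" for l
      using assms that \<open>i < n - 1\<close> sin_double_arctan_eq_0_iff by simp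
    moreover have "1 + (t i)\<^sup>2 > 0" by (simp add: add_pos_nonneg)
    ultimately show ?thesis using that by (simp add: partial_sigma'_sphere_diag prod_zero_iff)
  qed
  thus ?thesis
    by (subst detm_lower_triangular) (simp_all add: partial_sigma'_sphere_upper prod_zero_iff)
qed

theorem lemma4:
  fixes n :: nat and A :: "nat \<Rightarrow> nat \<Rightarrow> real" and b :: "nat \<Rightarrow> real" and c :: real
    and T :: "nat \<Rightarrow> nat \<Rightarrow> real" and v :: "nat \<Rightarrow> real"
    and k :: nat and eps :: "nat \<Rightarrow> real" and c' :: real
    and Ops :: "(nat \<Rightarrow> real) set"
  assumes "n \<ge> 2"
    and "symmetric_mat n A" and "nonzero_mat n A"
    and "\<exists>p q. p \<in> quadric n A b c \<and> q \<in> quadric n A b c \<and> p \<noteq> q"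
    and "\<not> contains_line n (quadric n A b c)"
    and "invertible_mat n T" and "v \<in> Rn n"
    and "k \<in> {1, 2, 3}"
    and "k = 1 \<Longrightarrow> \<forall>j<n-1. eps j \<in> {-1, 1}"
    and "k = 2 \<Longrightarrow> c' \<noteq> 0 \<and> (\<forall>j\<in>{1..<n-1}. eps j \<in> {-1, 1})"
    and "\<exists>r::real. r \<noteq> 0 \<and> (\<forall>s'\<in>Rn n.
           quadf n A b c (affmap n T v s') = r * normal_form k n eps c' s')"
    and "openin (top_of_set (Rn (n-1))) Ops" and "Ops \<noteq> {}"
    and "Ops \<subseteq> paramdom k n - {t. sigma n T v k eps c' t 0 = 0}"
  shows "\<exists>t\<in>Ops. detm (n-1) (\<lambda>i j. partial (sigma' k n eps c' i) j t) \<noteq> 0"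
proof -
  obtain t0 where t0: "t0 \<in> Ops" using assms(13) by blast
  consider "k = 1 \<or> k = 2" | "k = 3" using assms(8) by auto
  then show ?thesis
  proof cases
    case 1
    then show ?thesis using t0 detm_jacobian_sigma'_graph by fastforce
  next
    case 2
    obtain t where "t \<in> Ops" "\<And>l. l < n - 1 \<Longrightarrow> t l \<noteq> 0"
      using openin_Rn_obtains_nonzero_coordinates[OF assms(12) t0] by blast
    then show ?thesis using 2 detm_jacobian_sigma'_sphere_neq_0 by blast
  qed
qed

end
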